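(* Let $p$ be a prime, $q=p^r$ with $r\in\mathbb{Z}^+$, and let $d\neq p$ be a prime such that $q\not\equiv 1\pmod{d}$. Then for all integers $a$ with $1\le a\le q-2$ and all integers $i$ with $0\le i\le r-1$, $$d\left\lfloor\frac{ap^i}{q-1}\right\rfloor+\left\lfloor\frac{-dap^i}{q-1}\right\rfloor=(d-1)\left\lfloor\frac{ap^i}{q-1}\right\rfloor+\sum_{h=1}^{d-1}\left\lfloor\left\langle\frac{hp^i}{d}\right\rangle-\frac{ap^i}{q-1}\right\rfloor-1.$$
   Context: For $x\in\mathbb{Q}$, $\lfloor x\rfloor$ denotes the greatest integer less than or equal to $x$, and $\langle x\rangle=x-\lfloor x\rfloor$ denotes its fractional part. *)

theory Defs
  imports Complex_Main "HOL-Computational_Algebra.Primes"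
begin

end

theory Submission
  imports Defs
begin

text \<open>
  Put \<open>x = a p^i / (q - 1)\<close>. As \<open>q - 1\<close> is coprime to \<open>p\<close> and \<open>0 < a < q - 1\<close>, \<open>x\<close> is
  not an integer, so \<open>\<lfloor>-x\<rfloor> = -\<lfloor>x\<rfloor> - 1\<close>. Multiplication by \<open>p^i\<close> permutes the nonzero
  residues modulo \<open>d\<close>, turning the sum into the sum of \<open>\<lfloor>k/d - x\<rfloor>\<close> over \<open>0 < k < d\<close>, which by
  Hermite's identity is \<open>\<lfloor>-dx\<rfloor> - \<lfloor>-x\<rfloor>\<close>.
\<close>

lemma floor_divide_of_int_eq_floor_div:
  fixes y :: "'a::floor_ceiling" and n :: int
  assumes "n > 0"
  shows "\<lfloor>y / of_int n\<rfloor> = \<lfloor>y\<rfloor> div n"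
proof (rule floor_unique)
  let ?m = "\<lfloor>y\<rfloor>"
  have "n * (?m div n) = ?m - ?m mod n"
    by (simp add: minus_mod_eq_mult_div)
  then have "n * (?m div n) \<le> ?m" "?m + 1 \<le> n * (?m div n) + n"
    using assms pos_mod_bound[of n ?m] pos_mod_sign[of n ?m] by linarith+
  then have "of_int (n * (?m div n)) \<le> (of_int ?m :: 'a)"
    "(of_int (?m + 1) :: 'a) \<le> of_int (n * (?m div n) + n)"
    by (simp_all only: of_int_le_iff)
  then have "of_int n * of_int (?m div n) \<le> y" "y < of_int n * of_int (?m div n) + of_int n"
    using of_int_floor_le[of y] floor_correct[of y] by simp_all linarith
  then show "of_int (?m div n) \<le> y / of_int n" "y / of_int n < of_int (?m div n) + 1"
    using assms by (simp_all add: pos_le_divide_eq pos_divide_less_eq mult.commute distrib_left)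
qed

lemma sum_div_consecutive:
  fixes n :: nat and m :: int
  assumes "n > 0"
  shows "(\<Sum>k<n. (m + int k) div int n) = m"
proof -
  define S where "S m = (\<Sum>k<n. (m + int k) div int n)" for m
  have step: "S (m + 1) = S m + 1" for m
  proof -
    have "S (m + 1) = (\<Sum>k<Suc n. (m + int k) div int n) - m div int n"
      unfolding S_def sum.lessThan_Suc_shift by (simp add: algebra_simps)
    also have "\<dots> = S m + (m + int n) div int n - m div int n"
      unfolding S_def by simp
    finally show ?thesis using assms by simp
  qed
  have "S m = m"
  proof (induction m rule: int_induct[where k = 0])
    case base
    then show ?case unfolding S_def by simp
  next
    case (step1 i)
    then show ?case using step by simp
  next
    case (step2 i)
    then show ?case using step[of "i - 1"] by simp
  qed
  then show ?thesis unfolding S_def .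
qed

lemma sum_floor_add_divide:
  fixes z :: "'a::floor_ceiling" and n :: nat
  assumes "n > 0"
  shows "(\<Sum>k<n. \<lfloor>z + of_nat k / of_nat n\<rfloor>) = \<lfloor>of_nat n * z\<rfloor>"
proof -
  have "\<lfloor>z + of_nat k / of_nat n\<rfloor> = (\<lfloor>of_nat n * z\<rfloor> + int k) div int n" for k
  proof -
    have "z + of_nat k / of_nat n = (of_nat n * z + of_int (int k)) / of_int (int n)"
      using assms by (simp add: field_simps)
    then show ?thesis
      using floor_divide_of_int_eq_floor_div[of "int n" "of_nat n * z + of_int (int k)"] assms
      by simp
  qed
  then show ?thesis
    using sum_div_consecutive[OF assms] by simp
qed

lemma frac_divide_of_int:
  fixes m n :: int
  assumes "n > 0"
  shows "frac (of_int m / of_int n :: 'a::floor_ceiling) = of_int (m mod n) / of_int n"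
proof -
  have "of_int (m mod n) = (of_int m - of_int n * of_int (m div n) :: 'a)"
    by (metis minus_div_mult_eq_mod mult.commute of_int_diff of_int_mult)
  then show ?thesis
    using assms by (simp add: frac_def floor_divide_of_int_eq field_simps)
qed

lemma bij_betw_mult_mod_nonzero:
  fixes c n :: int
  assumes "n > 0" and "coprime n c"
  shows "bij_betw (\<lambda>h. h * c mod n) {1..n - 1} {1..n - 1}"
proof -
  have inj: "inj_on (\<lambda>h. h * c mod n) {1..n - 1}"
  proof
    fix h h' assume h: "h \<in> {1..n - 1}" "h' \<in> {1..n - 1}" and "h * c mod n = h' * c mod n"
    then have "n dvd (h - h') * c"
      by (simp add: mod_eq_dvd_iff left_diff_distrib)
    then have "n dvd h - h'"
      using assms(2) by (simp add: coprime_dvd_mult_left_iff)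
    moreover have "\<bar>h - h'\<bar> < n"
      using h by auto
    ultimately show "h = h'"
      using dvd_imp_le_int[of "h - h'" n] by force
  qed
  have "h * c mod n \<in> {1..n - 1}" if "h \<in> {1..n - 1}" for h
  proof -
    have "\<not> n dvd h"
      using that by (auto dest: zdvd_imp_le)
    then have "h * c mod n \<noteq> 0"
      using assms(2) by (simp add: coprime_dvd_mult_left_iff mod_eq_0_iff_dvd)
    then show ?thesis
      unfolding atLeastAtMost_iff
      using assms(1) pos_mod_bound[of n "h * c"] pos_mod_sign[of n "h * c"] by linarith
  qed
  then have "(\<lambda>h. h * c mod n) ` {1..n - 1} \<subseteq> {1..n - 1}"
    by blast
  then show ?thesis
    unfolding bij_betw_def using inj endo_inj_surj[OF _ _ inj] by simp
qed

lemma floor_minus_not_Ints: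
  fixes x :: "'a::floor_ceiling"
  assumes "x \<notin> \<int>"
  shows "\<lfloor>- x\<rfloor> = - \<lfloor>x\<rfloor> - 1"
proof -
  have "x \<noteq> of_int \<lfloor>x\<rfloor>"
    using assms by (metis Ints_of_int)
  then show ?thesis
    by (simp add: floor_minus ceiling_altdef)
qed

lemma sum_floor_frac_mult_minus:
  fixes x :: "'a::floor_ceiling" and n :: nat and c :: int
  assumes "n > 0" and "coprime (int n) c" and "x \<notin> \<int>"
  shows "(\<Sum>h\<in>{1..int n - 1}. \<lfloor>frac (of_int h * of_int c / of_nat n) - x\<rfloor>)
           = \<lfloor>- (of_nat n * x)\<rfloor> + \<lfloor>x\<rfloor> + 1"
proof -
  define g where "g k = \<lfloor>of_int k / of_nat n - x\<rfloor>" for k :: int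
  have "(\<Sum>h\<in>{1..int n - 1}. \<lfloor>frac (of_int h * of_int c / of_nat n) - x\<rfloor>)
          = (\<Sum>h\<in>{1..int n - 1}. g (h * c mod int n))"
    using frac_divide_of_int[of "int n" "_ * c", where 'a = 'a] assms(1)
    unfolding g_def by simp
  also have "\<dots> = (\<Sum>k\<in>{1..int n - 1}. g k)"
    using sum.reindex_bij_betw[OF bij_betw_mult_mod_nonzero[of "int n" c]] assms(1,2) by simp
  also have "\<dots> = (\<Sum>k\<in>{1..<n}. g (int k))"
  proof -
    have "{1..int n - 1} = int ` {1..<n}"
      by (simp add: image_int_atLeastLessThan atLeastLessThanPlusOne_atLeastAtMost_int[symmetric])
    then show ?thesis
      by (simp add: sum.reindex)
  qed
  also have "\<dots> = (\<Sum>k<n. g (int k)) - g 0"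
    using assms(1) by (simp add: lessThan_atLeast0 sum.atLeast_Suc_lessThan)
  also have "(\<Sum>k<n. g (int k)) = \<lfloor>of_nat n * - x\<rfloor>"
    using sum_floor_add_divide[OF assms(1), of "- x"] unfolding g_def by (simp add: add.commute)
  finally show ?thesis
    using floor_minus_not_Ints[OF assms(3)] unfolding g_def by simp
qed

theorem lemma3p2:
  fixes p r d q :: nat and a :: int and i :: nat
  assumes "prime p" and "r > 0" and "q = p ^ r"
    and "prime d" and "d \<noteq> p" and "q mod d \<noteq> 1 mod d"
    and "1 \<le> a" and "a \<le> int q - 2"
    and "i \<le> r - 1"
  shows "int d * floor ((of_int a * of_nat p ^ i / (of_nat q - 1) :: rat))
           + floor ((- of_nat d * of_int a * of_nat p ^ i / (of_nat q - 1) :: rat))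
         = (int d - 1) * floor ((of_int a * of_nat p ^ i / (of_nat q - 1) :: rat))
           + (\<Sum>h\<in>{1..int d - 1}.
                floor (frac ((of_int h * of_nat p ^ i) / of_nat d :: rat)
                   - (of_int a * of_nat p ^ i) / (of_nat q - 1)))
           - 1"
proof -
  define x where "x = (of_int a * of_nat p ^ i / (of_nat q - 1) :: rat)"
  have "coprime (int q - 1) (int p ^ r)"
    using assms(3) by (metis coprime_diff_one_left of_nat_power)
  then have coprime_q: "coprime (int q - 1) (int p ^ i)"
    using assms(2) by (simp add: coprime_power_right_iff)
  have "\<not> (int q - 1) dvd a * int p ^ i"
    using coprime_q assms(7,8) by (auto simp: coprime_dvd_mult_left_iff dest: zdvd_imp_le)
  then have "x \<notin> \<int>"
    using of_int_div_of_int_in_Ints_iff[of "a * int p ^ i" "int q - 1", where 'a = rat] assms(7,8)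
    unfolding x_def by simp
  moreover have "coprime (int d) (int p ^ i)"
    using assms(1,4,5) by (simp add: primes_coprime coprime_power_right_iff)
  moreover have "d > 0"
    using assms(4) prime_gt_0_nat by blast
  ultimately have "(\<Sum>h\<in>{1..int d - 1}. \<lfloor>frac (of_int h * of_nat p ^ i / of_nat d) - x\<rfloor>)
                     = \<lfloor>- (of_nat d * x)\<rfloor> + \<lfloor>x\<rfloor> + 1"
    using sum_floor_frac_mult_minus[of d "int p ^ i" x] by simp
  moreover have "- of_nat d * of_int a * of_nat p ^ i / (of_nat q - 1) = - (of_nat d * x)"
    unfolding x_def by simp
  ultimately show ?thesis
    unfolding x_def[symmetric] by (simp add: algebra_simps)
qed

end
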